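(* Let $G$ be a finite abstract simplicial complex with connection matrix $L$ and $g=L^{-1}$. Then for every $x\in G$, $g(x,x)=1-\chi(S(x))$.
   Context: A finite abstract simplicial complex $G$ is a finite set of non-empty finite sets closed under taking non-empty subsets. The connection matrix $L$ has $L(x,y)=1$ if $x\cap y\neq\emptyset$ and $0$ otherwise. The Barycentric refinement $G_1$ is the graph with vertex set $G$ where $x\neq y$ are adjacent iff $x\subset y$ or $y\subset x$. $S(x)$ is the set of $y\in G$ with $y\subsetneq x$ or $x\subsetneq y$, and $\chi(S(x))$ is the Euler characteristic $\sum_K(-1)^{|K|-1}$ over non-empty cliques $K$ of the subgraph of $G_1$ induced on $S(x)$. *)

theory Defs
  imports Complex_Main
begin

definition simplicial_complex :: "'a set set \<Rightarrow> bool" where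
  "simplicial_complex G \<longleftrightarrow> finite G \<and>
     (\<forall>x\<in>G. finite x \<and> x \<noteq> {}) \<and>
     (\<forall>x\<in>G. \<forall>y. y \<subseteq> x \<and> y \<noteq> {} \<longrightarrow> y \<in> G)"

definition conn_matrix :: "'a set \<Rightarrow> 'a set \<Rightarrow> real" where
  "conn_matrix x y = (if x \<inter> y \<noteq> {} then 1 else 0)"

definition is_inverse_on :: "'a set set \<Rightarrow> ('a set \<Rightarrow> 'a set \<Rightarrow> real) \<Rightarrow> ('a set \<Rightarrow> 'a set \<Rightarrow> real) \<Rightarrow> bool" where
  "is_inverse_on G M g \<longleftrightarrow>
     (\<forall>x\<in>G. \<forall>z\<in>G. (\<Sum>y\<in>G. M x y * g y z) = (if x = z then 1 else 0)) \<and>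
     (\<forall>x\<in>G. \<forall>z\<in>G. (\<Sum>y\<in>G. g x y * M y z) = (if x = z then 1 else 0))"

text \<open>Adjacency in the Barycentric refinement G_1.\<close>
definition bary_adj :: "'a set \<Rightarrow> 'a set \<Rightarrow> bool" where
  "bary_adj x y \<longleftrightarrow> x \<noteq> y \<and> (x \<subseteq> y \<or> y \<subseteq> x)"

definition unit_sphere :: "'a set set \<Rightarrow> 'a set \<Rightarrow> 'a set set" where
  "unit_sphere G x = {y \<in> G. y \<subset> x \<or> x \<subset> y}"

text \<open>Non-empty cliques of the subgraph of G_1 induced on the vertex set V.\<close>
definition bary_cliques :: "'a set set \<Rightarrow> 'a set set set" where
  "bary_cliques V = {K. K \<subseteq> V \<and> K \<noteq> {} \<and> (\<forall>a\<in>K. \<forall>b\<in>K. a \<noteq> b \<longrightarrow> bary_adj a b)}"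

definition euler_char :: "'a set set \<Rightarrow> int" where
  "euler_char V = (\<Sum>K\<in>bary_cliques V. (-1) ^ (card K - 1))"

end

theory Submission
  imports Defs
begin

text \<open>The inverse of the connection matrix is explicit:
g(x,y) = -(-1)^(|x|+|y|) \<Sum>{(-1)^|z| : z \<in> G, x \<union> y \<subseteq> z}. Multiplying by L and summing
first over the faces y of each z that meet x leaves only alternating sums over Boolean
intervals [w, x], which vanish unless w = x.

On the other side, 1 - \<chi>(S(x)) is the signed count of all chains of S(x), the empty chain
included. Every proper face of x lies below every proper coface, so this count factors into
the counts for the faces and for the cofaces of x. Classifying chains by their top element
computes the signed count of any family of sets above a that is closed under intervals
as 1 + (-1)^|a| \<Sum>(-1)^|z| (Philip Hall's theorem for Boolean lattices), and the product
of the two counts is exactly g(x,x).\<close>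

lemma sum_neg_one_power_interval:
  fixes a m :: "'a set"
  assumes "finite m"
  shows "(\<Sum>s | a \<subseteq> s \<and> s \<subseteq> m. (-1::real) ^ card s) = (if a = m then (-1) ^ card a else 0)"
proof (cases "a \<subset> m")
  case True
  let ?I = "{s. s \<subseteq> m \<and> a \<subseteq> s}"
  have "finite ?I" using assms by (simp add: finite_subset)
  moreover have "card {s. s \<in> ?I \<and> even (card s)} = card {s. s \<in> ?I \<and> odd (card s)}"
    using card_subsupersets_even_odd[OF assms True] by (simp add: conj_assoc)
  ultimately have "(\<Sum>s\<in>?I. (-1::real) ^ card s) = 0"
    by (rule sum_alternating_cancels)
  moreover have "{s. a \<subseteq> s \<and> s \<subseteq> m} = ?I" by blast
  ultimately show ?thesis using True by simp
next
  case False
  then have "{s. a \<subseteq> s \<and> s \<subseteq> m} = (if a = m then {m} else {})" by auto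
  then show ?thesis by simp
qed

lemma sum_neg_one_power_open_interval:
  fixes a m :: "'a set"
  assumes "finite m" "a \<subset> m"
  shows "(\<Sum>s | a \<subset> s \<and> s \<subset> m. (-1::real) ^ card s) = - ((-1) ^ card a) - (-1) ^ card m"
proof -
  let ?I = "{s. a \<subseteq> s \<and> s \<subseteq> m}"
  have "finite ?I" using assms(1) by (simp add: finite_subset)
  moreover have "{s. a \<subset> s \<and> s \<subset> m} = ?I - {a, m}" "{a, m} \<subseteq> ?I"
    using assms(2) by auto
  ultimately have "(\<Sum>s | a \<subset> s \<and> s \<subset> m. (-1::real) ^ card s)
      = (\<Sum>s\<in>?I. (-1) ^ card s) - (\<Sum>s\<in>{a, m}. (-1) ^ card s)"
    by (simp only: sum_diff)
  then show ?thesis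
    using assms sum_neg_one_power_interval[of m a] by simp
qed

lemma sum_neg_one_power_Pow:
  "finite B \<Longrightarrow> (\<Sum>T\<in>Pow B. (-1::real) ^ card T) = (if B = {} then 1 else 0)"
  using sum_neg_one_power_interval[of B "{}"] by (simp add: Pow_def)

lemma sum_neg_one_power_subsets_meeting:
  assumes "finite z" "z \<noteq> {}"
  shows "(\<Sum>y | y \<subseteq> z \<and> x \<inter> y \<noteq> {}. (-1::real) ^ card y) = (if z \<subseteq> x then -1 else 0)"
proof -
  have "{y. y \<subseteq> z \<and> x \<inter> y \<noteq> {}} = Pow z - Pow (z - x)" "Pow (z - x) \<subseteq> Pow z" by auto
  then have "(\<Sum>y | y \<subseteq> z \<and> x \<inter> y \<noteq> {}. (-1::real) ^ card y)
      = (\<Sum>y\<in>Pow z. (-1) ^ card y) - (\<Sum>y\<in>Pow (z - x). (-1) ^ card y)"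
    using assms(1) by (simp only: sum_diff finite_Pow_iff)
  then show ?thesis
    using assms sum_neg_one_power_Pow[of z] sum_neg_one_power_Pow[of "z - x"] by simp
qed

lemma simplicial_complexD:
  assumes "simplicial_complex G"
  shows "finite G" "\<And>x. x \<in> G \<Longrightarrow> finite x" "\<And>x. x \<in> G \<Longrightarrow> x \<noteq> {}"
    and "\<And>x y. x \<in> G \<Longrightarrow> y \<subseteq> x \<Longrightarrow> y \<noteq> {} \<Longrightarrow> y \<in> G"
  using assms unfolding simplicial_complex_def by blast+

definition conn_inverse :: "'a set set \<Rightarrow> 'a set \<Rightarrow> 'a set \<Rightarrow> real" where
  "conn_inverse G x y = - ((-1) ^ (card x + card y) * (\<Sum>z | z \<in> G \<and> x \<union> y \<subseteq> z. (-1) ^ card z))"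

lemma conn_matrix_conn_inverse:
  assumes G: "simplicial_complex G" and "x \<in> G" "w \<in> G"
  shows "(\<Sum>y\<in>G. conn_matrix x y * conn_inverse G y w) = (if x = w then 1 else 0)"
proof -
  note G = simplicial_complexD[OF G]
  let ?s = "\<lambda>y. (-1::real) ^ card y"
  have faces_meeting: "{y \<in> {y \<in> G. x \<inter> y \<noteq> {}}. y \<union> w \<subseteq> z}
      = (if w \<subseteq> z then {y. y \<subseteq> z \<and> x \<inter> y \<noteq> {}} else {})"
    if "z \<in> G" for z
    using that G(4) by auto
  have "(\<Sum>y\<in>G. conn_matrix x y * conn_inverse G y w)
      = - ?s w * (\<Sum>y | y \<in> G \<and> x \<inter> y \<noteq> {}. \<Sum>z | z \<in> G \<and> y \<union> w \<subseteq> z. ?s y * ?s z)"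
  proof -
    have "(\<Sum>y\<in>G. conn_matrix x y * conn_inverse G y w)
        = (\<Sum>y | y \<in> G \<and> x \<inter> y \<noteq> {}. conn_inverse G y w)"
      unfolding sum.inter_filter[OF G(1)] by (rule sum.cong) (simp_all add: conn_matrix_def)
    then show ?thesis
      by (simp add: conn_inverse_def sum_distrib_left sum_negf power_add mult_ac)
  qed
  also have "(\<Sum>y | y \<in> G \<and> x \<inter> y \<noteq> {}. \<Sum>z | z \<in> G \<and> y \<union> w \<subseteq> z. ?s y * ?s z)
      = (\<Sum>z\<in>G. \<Sum>y | y \<in> {y \<in> G. x \<inter> y \<noteq> {}} \<and> y \<union> w \<subseteq> z. ?s y * ?s z)"
    using G(1) by (intro sum.swap_restrict) simp_all
  also have "\<dots> = (\<Sum>z\<in>G. if w \<subseteq> z \<and> z \<subseteq> x then - ?s z else 0)"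
  proof (rule sum.cong)
    fix z assume "z \<in> G"
    then show "(\<Sum>y | y \<in> {y \<in> G. x \<inter> y \<noteq> {}} \<and> y \<union> w \<subseteq> z. ?s y * ?s z)
        = (if w \<subseteq> z \<and> z \<subseteq> x then - ?s z else 0)"
      unfolding faces_meeting[OF \<open>z \<in> G\<close>]
      using G(2,3) by (simp add: sum_distrib_right[symmetric] sum_neg_one_power_subsets_meeting)
  qed simp
  also have "\<dots> = - (\<Sum>z | w \<subseteq> z \<and> z \<subseteq> x. ?s z)"
  proof -
    have "{z \<in> G. w \<subseteq> z \<and> z \<subseteq> x} = {z. w \<subseteq> z \<and> z \<subseteq> x}"
      using G(3,4) \<open>x \<in> G\<close> \<open>w \<in> G\<close> by blast
    then show ?thesis
      unfolding sum.inter_filter[OF G(1), symmetric] by (simp add: sum_negf)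
  qed
  finally have "(\<Sum>y\<in>G. conn_matrix x y * conn_inverse G y w)
      = ?s w * (\<Sum>z | w \<subseteq> z \<and> z \<subseteq> x. ?s z)"
    by simp
  moreover have "?s w * ?s w = 1" by (simp flip: power_add)
  ultimately show ?thesis
    using sum_neg_one_power_interval[of x w] G(2) \<open>x \<in> G\<close> by simp
qed

lemma conn_inverse_commute: "conn_inverse G x y = conn_inverse G y x"
  unfolding conn_inverse_def by (simp add: Un_commute add.commute)

lemma conn_matrix_commute: "conn_matrix x y = conn_matrix y x"
  unfolding conn_matrix_def by (simp add: Int_commute)

lemma is_inverse_on_conn_inverse:
  assumes "simplicial_complex G"
  shows "is_inverse_on G conn_matrix (conn_inverse G)"
  unfolding is_inverse_on_def
proof (intro conjI ballI)
  fix x z assume "x \<in> G" "z \<in> G"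
  then show "(\<Sum>y\<in>G. conn_matrix x y * conn_inverse G y z) = (if x = z then 1 else 0)"
    by (rule conn_matrix_conn_inverse[OF assms])
  have "(\<Sum>y\<in>G. conn_inverse G x y * conn_matrix y z) = (\<Sum>y\<in>G. conn_matrix z y * conn_inverse G y x)"
    by (simp add: conn_inverse_commute[of G x] conn_matrix_commute[of _ z] mult.commute)
  also have "\<dots> = (if x = z then 1 else 0)"
    using conn_matrix_conn_inverse[OF assms \<open>z \<in> G\<close> \<open>x \<in> G\<close>] by auto
  finally show "(\<Sum>y\<in>G. conn_inverse G x y * conn_matrix y z) = (if x = z then 1 else 0)" .
qed

lemma is_inverse_on_unique:
  assumes "finite G" "is_inverse_on G M g" "is_inverse_on G M h" "x \<in> G" "z \<in> G"
  shows "g x z = h x z"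
proof -
  have "g x z = (\<Sum>y\<in>G. g x y * (if y = z then 1 else 0))"
    using assms(1,5) by (simp add: if_distrib cong: if_cong)
  also have "\<dots> = (\<Sum>y\<in>G. g x y * (\<Sum>u\<in>G. M y u * h u z))"
    using assms(3,5) unfolding is_inverse_on_def by (intro sum.cong) auto
  also have "\<dots> = (\<Sum>y\<in>G. \<Sum>u\<in>G. g x y * M y u * h u z)"
    by (simp add: sum_distrib_left mult.assoc)
  also have "\<dots> = (\<Sum>u\<in>G. (\<Sum>y\<in>G. g x y * M y u) * h u z)"
    by (subst sum.swap) (simp add: sum_distrib_right)
  also have "\<dots> = (\<Sum>u\<in>G. if x = u then h u z else 0)"
    using assms(2,4) unfolding is_inverse_on_def by (intro sum.cong) auto
  also have "\<dots> = h x z"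
    using assms(1,4) by simp
  finally show ?thesis .
qed

definition signed_chain_count :: "'a set set \<Rightarrow> real" where
  "signed_chain_count P = (\<Sum>K\<in>chains P. (-1) ^ card K)"

lemma finite_chains: "finite P \<Longrightarrow> finite (chains P)"
  unfolding chains_def by (rule finite_subset[of _ "Pow P"]) auto

lemma euler_char_eq_signed_chain_count:
  assumes "finite V"
  shows "real_of_int (euler_char V) = 1 - signed_chain_count V"
proof -
  have cliques: "bary_cliques V = chains V - {{}}"
    unfolding bary_cliques_def chains_def chain_subset_def bary_adj_def by blast
  have "(-1::real) ^ (card K - 1) = - ((-1) ^ card K)" if "K \<in> chains V - {{}}" for K
  proof -
    have "card K \<noteq> 0" using that assms by (auto simp: chains_def finite_subset)
    then show ?thesis by (cases "card K") simp_all
  qed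
  then have "real_of_int (euler_char V) = (\<Sum>K\<in>chains V - {{}}. - ((-1::real) ^ card K))"
    unfolding euler_char_def cliques by simp
  also have "\<dots> = 1 - signed_chain_count V"
    using finite_chains[OF assms] by (simp add: signed_chain_count_def sum_negf sum_diff1 chains_def chain_subset_def)
  finally show ?thesis .
qed

lemma bij_betw_chains_top:
  assumes "finite P"
  shows "bij_betw (\<lambda>(z, K). insert z K) (SIGMA z:P. chains {s \<in> P. s \<subset> z}) (chains P - {{}})"
proof -
  have top: "\<Union>K \<in> K" if "K \<in> chains P - {{}}" for K
  proof -
    have "finite K" "K \<noteq> {}" "subset.chain UNIV K"
      using that assms by (auto simp: chains_def chain_subset_alt_def intro: finite_subset)
    then show ?thesis by (rule Union_in_chain)
  qed
  show ?thesis
  proof (rule bij_betw_byWitness[where f' = "\<lambda>K. (\<Union>K, K - {\<Union>K})"], goal_cases)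
    case 1
    show ?case by (auto simp: chains_def)
  next
    case 2
    show ?case using top by auto
  next
    case 3
    show ?case by (auto simp: chains_def chain_subset_def)
  next
    case 4
    show ?case
    proof (rule image_subsetI)
      fix K assume K: "K \<in> chains P - {{}}"
      then have "K - {\<Union>K} \<in> chains {s \<in> P. s \<subset> \<Union>K}"
        by (auto simp: chains_def chain_subset_def)
      with top[OF K] K show "(\<Union>K, K - {\<Union>K}) \<in> (SIGMA z:P. chains {s \<in> P. s \<subset> z})"
        by (auto simp: chains_def)
    qed
  qed
qed

lemma signed_chain_count_by_top:
  assumes "finite P"
  shows "signed_chain_count P = 1 - (\<Sum>z\<in>P. signed_chain_count {s \<in> P. s \<subset> z})"
proof -
  have card_insert_top: "card (insert z K) = Suc (card K)" if "K \<in> chains {s \<in> P. s \<subset> z}" for z K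
  proof -
    have "finite K" "z \<notin> K"
      using that assms by (auto simp: chains_def intro: finite_subset[of K P])
    then show ?thesis by simp
  qed
  have "(\<Sum>K\<in>chains P - {{}}. (-1::real) ^ card K)
      = (\<Sum>(z, K)\<in>(SIGMA z:P. chains {s \<in> P. s \<subset> z}). (-1) ^ card (insert z K))"
    using sum.reindex_bij_betw[OF bij_betw_chains_top[OF assms], where g = "\<lambda>K. (-1::real) ^ card K"]
    by (simp add: case_prod_unfold)
  also have "\<dots> = (\<Sum>z\<in>P. \<Sum>K\<in>chains {s \<in> P. s \<subset> z}. (-1) ^ card (insert z K))"
    using assms by (intro sum.Sigma[symmetric]) (simp_all add: finite_chains)
  also have "\<dots> = - (\<Sum>z\<in>P. signed_chain_count {s \<in> P. s \<subset> z})"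
    by (simp add: card_insert_top signed_chain_count_def sum_negf)
  finally show ?thesis
    using finite_chains[OF assms]
    by (simp add: signed_chain_count_def sum_diff1 chains_def chain_subset_def)
qed

lemma signed_chain_count_above:
  assumes "finite P"
    and "\<And>z. z \<in> P \<Longrightarrow> a \<subset> z \<and> finite z"
    and "\<And>z w. z \<in> P \<Longrightarrow> a \<subset> w \<Longrightarrow> w \<subseteq> z \<Longrightarrow> w \<in> P"
  shows "signed_chain_count P = 1 + (-1) ^ card a * (\<Sum>z\<in>P. (-1) ^ card z)"
  using assms
proof (induction P rule: finite_psubset_induct)
  case (psubset P)
  have below: "signed_chain_count {s \<in> P. s \<subset> z} = - ((-1) ^ card a * (-1) ^ card z)" if "z \<in> P" for z
  proof -
    have "a \<subset> z" "finite z" using psubset.prems(1) that by auto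
    have interval: "{s \<in> P. s \<subset> z} = {s. a \<subset> s \<and> s \<subset> z}"
      using psubset.prems that by blast
    have "signed_chain_count {s \<in> P. s \<subset> z}
        = 1 + (-1) ^ card a * (\<Sum>s\<in>{s \<in> P. s \<subset> z}. (-1) ^ card s)"
    proof (rule psubset.IH)
      show "{s \<in> P. s \<subset> z} \<subset> P" using that by blast
      show "\<And>y. y \<in> {s \<in> P. s \<subset> z} \<Longrightarrow> a \<subset> y \<and> finite y"
        using psubset.prems(1) by blast
      show "\<And>y w. y \<in> {s \<in> P. s \<subset> z} \<Longrightarrow> a \<subset> w \<Longrightarrow> w \<subseteq> y
          \<Longrightarrow> w \<in> {s \<in> P. s \<subset> z}"
        using psubset.prems(2) by blast
    qed
    moreover have "(\<Sum>s | a \<subset> s \<and> s \<subset> z. (-1::real) ^ card s) = - ((-1) ^ card a) - (-1) ^ card z"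
      using sum_neg_one_power_open_interval[OF \<open>finite z\<close> \<open>a \<subset> z\<close>] .
    moreover have "(-1::real) ^ card a * (-1) ^ card a = 1"
      by (simp flip: power_add)
    ultimately show ?thesis
      unfolding interval by (simp add: algebra_simps)
  qed
  show ?case
    using signed_chain_count_by_top[OF psubset.hyps(1)] by (simp add: below sum_distrib_left sum_negf)
qed

lemma bij_betw_chains_Un:
  assumes "\<And>l u. l \<in> L \<Longrightarrow> u \<in> U \<Longrightarrow> l \<subset> u"
  shows "bij_betw (\<lambda>(A, B). A \<union> B) (chains L \<times> chains U) (chains (L \<union> U))"
proof (rule bij_betw_byWitness[where f' = "\<lambda>K. (K \<inter> L, K \<inter> U)"], goal_cases)
  case 1
  have "L \<inter> U = {}" using assms by blast
  then show ?case by (auto simp: chains_def)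
next
  case 2
  show ?case by (auto simp: chains_def)
next
  case 3
  show ?case
  proof (rule image_subsetI, clarify)
    fix A B assume "A \<in> chains L" "B \<in> chains U"
    then have "A \<subseteq> L" "B \<subseteq> U" "chain\<^sub>\<subseteq> A" "chain\<^sub>\<subseteq> B"
      by (simp_all add: chains_def)
    moreover have "l \<subseteq> u" if "l \<in> A" "u \<in> B" for l u
      using assms that \<open>A \<subseteq> L\<close> \<open>B \<subseteq> U\<close> by blast
    ultimately show "A \<union> B \<in> chains (L \<union> U)"
      unfolding chains_def chain_subset_def by blast
  qed
next
  case 4
  show ?case by (auto simp: chains_def chain_subset_def)
qed

lemma signed_chain_count_Un:
  assumes "finite L" "finite U" "\<And>l u. l \<in> L \<Longrightarrow> u \<in> U \<Longrightarrow> l \<subset> u"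
  shows "signed_chain_count (L \<union> U) = signed_chain_count L * signed_chain_count U"
proof -
  have card_Un: "card (A \<union> B) = card A + card B" if "A \<in> chains L" "B \<in> chains U" for A B
  proof (rule card_Un_disjoint)
    show "finite A" "finite B"
      using that assms(1,2) by (auto simp: chains_def intro: finite_subset)
    show "A \<inter> B = {}"
      using that assms(3) by (auto simp: chains_def)
  qed
  have "signed_chain_count (L \<union> U) = (\<Sum>(A, B)\<in>chains L \<times> chains U. (-1) ^ card (A \<union> B))"
    unfolding signed_chain_count_def
    using sum.reindex_bij_betw[OF bij_betw_chains_Un[OF assms(3)], where g = "\<lambda>K. (-1::real) ^ card K"]
    by (simp add: case_prod_unfold)
  also have "\<dots> = (\<Sum>(A, B)\<in>chains L \<times> chains U. (-1) ^ card A * (-1) ^ card B)"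
    by (rule sum.cong) (auto simp: card_Un power_add)
  also have "\<dots> = signed_chain_count L * signed_chain_count U"
    by (simp add: signed_chain_count_def sum_product sum.cartesian_product)
  finally show ?thesis .
qed

lemma conn_inverse_diag:
  assumes G: "simplicial_complex G" and "x \<in> G"
  shows "conn_inverse G x x = signed_chain_count (unit_sphere G x)"
proof -
  note G = simplicial_complexD[OF G]
  let ?s = "\<lambda>y. (-1::real) ^ card y"
  define faces where "faces = {y \<in> G. y \<subset> x}"
  define cofaces where "cofaces = {z \<in> G. x \<subset> z}"
  have "finite x" "{} \<subset> x" using G(2,3) \<open>x \<in> G\<close> by auto
  have faces_eq: "faces = {y. {} \<subset> y \<and> y \<subset> x}"
    using G(3,4) \<open>x \<in> G\<close> by (auto simp: faces_def)
  have "signed_chain_count faces = 1 + (-1) ^ card ({} :: 'a set) * (\<Sum>y\<in>faces. ?s y)"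
  proof (rule signed_chain_count_above)
    show "finite faces" using G(1) by (simp add: faces_def)
    show "\<And>z. z \<in> faces \<Longrightarrow> {} \<subset> z \<and> finite z"
      unfolding faces_eq using \<open>finite x\<close> finite_subset by blast
    show "\<And>z w. z \<in> faces \<Longrightarrow> {} \<subset> w \<Longrightarrow> w \<subseteq> z \<Longrightarrow> w \<in> faces"
      unfolding faces_eq by blast
  qed
  then have faces_count: "signed_chain_count faces = - ?s x"
    using sum_neg_one_power_open_interval[OF \<open>finite x\<close> \<open>{} \<subset> x\<close>] by (simp add: faces_eq)
  have cofaces_count: "signed_chain_count cofaces = 1 + ?s x * (\<Sum>z\<in>cofaces. ?s z)"
  proof (rule signed_chain_count_above)
    show "finite cofaces" using G(1) by (simp add: cofaces_def)
    show "\<And>z. z \<in> cofaces \<Longrightarrow> x \<subset> z \<and> finite z"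
      using G(2) by (simp add: cofaces_def)
    show "\<And>z w. z \<in> cofaces \<Longrightarrow> x \<subset> w \<Longrightarrow> w \<subseteq> z \<Longrightarrow> w \<in> cofaces"
      using G(4) by (auto simp: cofaces_def)
  qed
  have "{z \<in> G. x \<union> x \<subseteq> z} = insert x cofaces" "x \<notin> cofaces"
    using \<open>x \<in> G\<close> by (auto simp: cofaces_def)
  then have "conn_inverse G x x = - (?s x * ?s x * (?s x + (\<Sum>z\<in>cofaces. ?s z)))"
    using G(1) by (simp add: conn_inverse_def power_add cofaces_def)
  moreover have "?s x * ?s x = 1" by (simp flip: power_add)
  moreover have "unit_sphere G x = faces \<union> cofaces"
    by (auto simp: unit_sphere_def faces_def cofaces_def)
  moreover have "signed_chain_count (faces \<union> cofaces) = signed_chain_count faces * signed_chain_count cofaces"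
    using G(1) by (intro signed_chain_count_Un) (auto simp: faces_def cofaces_def)
  ultimately show ?thesis
    using faces_count cofaces_count by (simp add: algebra_simps)
qed

theorem mainTheorem9:
  fixes G :: "'a set set"
  assumes "simplicial_complex G"
  shows "(\<exists>g. is_inverse_on G conn_matrix g) \<and>
         (\<forall>g. is_inverse_on G conn_matrix g \<longrightarrow>
              (\<forall>x\<in>G. g x x = 1 - real_of_int (euler_char (unit_sphere G x))))"
proof (intro conjI allI impI ballI)
  show "\<exists>g. is_inverse_on G conn_matrix g"
    using is_inverse_on_conn_inverse[OF assms] by blast
next
  fix g x assume g: "is_inverse_on G conn_matrix g" and "x \<in> G"
  have "finite G" by (rule simplicial_complexD(1)[OF assms])
  then have "g x x = conn_inverse G x x"
    using is_inverse_on_unique g is_inverse_on_conn_inverse[OF assms] \<open>x \<in> G\<close> by blast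
  also have "\<dots> = signed_chain_count (unit_sphere G x)"
    by (rule conn_inverse_diag[OF assms \<open>x \<in> G\<close>])
  also have "\<dots> = 1 - real_of_int (euler_char (unit_sphere G x))"
    using euler_char_eq_signed_chain_count[of "unit_sphere G x"] \<open>finite G\<close>
    by (simp add: unit_sphere_def)
  finally show "g x x = 1 - real_of_int (euler_char (unit_sphere G x))" .
qed

end
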